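(* Let $R$ be a $d\times d$ expansive integer matrix, $B\subset\mathbb{Z}^d$ finite with $0\in B$, $N:=|B|$, $L\subset\mathbb{Z}^d$ finite with $0\in L$, and $(\alpha_l)_{l\in L}$ complex numbers. The following are equivalent: (i) the matrix $T=\frac{1}{\sqrt N}\left(e^{2\pi i (R^T)^{-1}l\cdot b}\alpha_l\right)_{l\in L,b\in B}$ has orthonormal columns; (ii) for every $t\in\mathbb{R}^d$, $\sum_{l\in L}|\alpha_l|^2\left|m_B((R^T)^{-1}(t-l))\right|^2=1$; (iii) the functions $\{\alpha_le_l: l\in L\}$ form a Parseval frame for $L^2(\delta_{R^{-1}B})$, where $\delta_{R^{-1}B}=\frac1N\sum_{b\in B}\delta_{R^{-1}b}$.
   Context: $e_\lambda(x)=e^{2\pi i\lambda\cdot x}$, $m_B(x)=\frac1N\sum_{b\in B}e^{2\pi ib\cdot x}$, $\delta_a$ is the Dirac measure at $a$. A family $\{f_i\}$ in a Hilbert space $H$ is a Parseval frame if $\sum_i|\langle v,f_i\rangle|^2=\|v\|^2$ for all $v\in H$. A matrix is expansive if all eigenvalues have modulus $>1$. *)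

theory Defs
  imports "HOL-Analysis.Analysis"
begin

definition int_matrix :: "real^'n^'n \<Rightarrow> bool" where
  "int_matrix R \<longleftrightarrow> (\<forall>i j. R $ i $ j \<in> \<int>)"

definition int_vec :: "real^'n \<Rightarrow> bool" where
  "int_vec v \<longleftrightarrow> (\<forall>i. v $ i \<in> \<int>)"

definition expansive :: "real^'n^'n \<Rightarrow> bool" where
  "expansive R \<longleftrightarrow>
     (\<forall>z::complex. det ((mat z - (\<chi> i j. complex_of_real (R $ i $ j))) :: complex^'n^'n) = 0
        \<longrightarrow> 1 < cmod z)"

definition e_fun :: "real^'n \<Rightarrow> real^'n \<Rightarrow> complex" where
  "e_fun lam x = exp (2 * of_real pi * \<i> * of_real (lam \<bullet> x))"

definition m_B :: "(real^'n) set \<Rightarrow> real^'n \<Rightarrow> complex" where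
  "m_B B x = (1 / of_nat (card B)) * (\<Sum>b\<in>B. e_fun b x)"

definition T_entry :: "real^'n^'n \<Rightarrow> (real^'n) set \<Rightarrow> (real^'n \<Rightarrow> complex)
    \<Rightarrow> real^'n \<Rightarrow> real^'n \<Rightarrow> complex" where
  "T_entry R B \<alpha> l b = (1 / of_real (sqrt (real (card B))))
      * e_fun (matrix_inv (transpose R) *v l) b * \<alpha> l"

definition orthonormal_columns :: "('r \<Rightarrow> 'c \<Rightarrow> complex) \<Rightarrow> 'r set \<Rightarrow> 'c set \<Rightarrow> bool" where
  "orthonormal_columns M Rows Cols \<longleftrightarrow>
     (\<forall>b\<in>Cols. \<forall>b'\<in>Cols. (\<Sum>l\<in>Rows. M l b * cnj (M l b')) = (if b = b' then 1 else 0))"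

definition parseval_frame :: "('v \<Rightarrow> 'v \<Rightarrow> complex) \<Rightarrow> 'v set \<Rightarrow> ('i \<Rightarrow> 'v) \<Rightarrow> 'i set \<Rightarrow> bool" where
  "parseval_frame ip H f I \<longleftrightarrow>
     (\<forall>v\<in>H. ((\<lambda>i. (cmod (ip v (f i)))\<^sup>2) has_sum Re (ip v v)) I)"

text \<open>Elements of L^2 are represented by arbitrary functions real^n => complex (all are square
  integrable since the measure is finite and finitely supported).\<close>
definition l2_delta_inner :: "real^'n^'n \<Rightarrow> (real^'n) set \<Rightarrow> (real^'n \<Rightarrow> complex)
    \<Rightarrow> (real^'n \<Rightarrow> complex) \<Rightarrow> complex" where
  "l2_delta_inner R B f g = (1 / of_nat (card B))
      * (\<Sum>b\<in>B. f (matrix_inv R *v b) * cnj (g (matrix_inv R *v b)))"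

end

theory Submission
  imports Defs
begin

text \<open>
  All three conditions say that the Gram matrix of the columns of \<open>T\<close> is the identity.
  Its entries are \<open>w(R\<^sup>-\<^sup>1(b - b')) / N\<close>, where \<open>w = weight_transform \<alpha> L\<close> is the Fourier
  transform of the measure \<open>\<Sum>l. |\<alpha> l|\<^sup>2 \<delta>\<^sub>l\<close>.
  The analysis operator of the system \<open>\<alpha>\<^sub>l e\<^sub>l\<close> on \<open>L\<^sup>2(\<delta>\<^bsub>R\<^sup>-\<^sup>1B\<^esub>)\<close> is, up to complex conjugation and
  the factor \<open>1/\<surd>N\<close>, the matrix \<open>T\<close> acting on the values of \<open>v\<close> on \<open>R\<^sup>-\<^sup>1B\<close>; so the Parseval
  property says that \<open>T\<close> is an isometry, which by polarization means orthonormal columns.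
  The sum in (ii) is the trigonometric polynomial
  \<open>N\<^sup>-\<^sup>2 \<Sum>b b'. w(R\<^sup>-\<^sup>1(b' - b)) e(R\<^sup>-\<^sup>1(b - b') \<cdot> t)\<close>, whose coefficients depend on \<open>(b, b')\<close>
  only through the frequency \<open>R\<^sup>-\<^sup>1(b - b')\<close>; by linear independence of characters it is identically \<open>1\<close> exactly
  when these coefficients are those of the constant \<open>1\<close>, which is again the Gram condition.
\<close>

lemma e_fun_add_left: "e_fun (a + b) x = e_fun a x * e_fun b x"
  unfolding e_fun_def by (simp add: inner_add_left distrib_left distrib_right exp_add)

lemma e_fun_add_right: "e_fun a (x + y) = e_fun a x * e_fun a y"
  unfolding e_fun_def by (simp add: inner_add_right distrib_left distrib_right exp_add)

lemma e_fun_zero_left [simp]: "e_fun 0 x = 1"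
  and e_fun_zero_right [simp]: "e_fun a 0 = 1"
  unfolding e_fun_def by simp_all

lemma e_fun_commute: "e_fun a x = e_fun x a"
  unfolding e_fun_def by (simp add: inner_commute)

lemma cnj_e_fun: "cnj (e_fun a x) = e_fun (- a) x"
  unfolding e_fun_def by (simp add: exp_cnj)

lemma e_fun_nonzero [simp]: "e_fun a x \<noteq> 0"
  unfolding e_fun_def by simp

lemma e_fun_times_cnj: "e_fun a x * cnj (e_fun b x) = e_fun (a - b) x"
  by (simp add: cnj_e_fun flip: e_fun_add_left)

lemma e_fun_separates:
  fixes a b :: "real^'n"
  assumes "a \<noteq> b"
  shows "\<exists>h. e_fun a h \<noteq> e_fun b h"
proof
  define h where "h = (1 / (4 * (norm (a - b))\<^sup>2)) *\<^sub>R (a - b)"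
  have quarter: "(a - b) \<bullet> h = 1/4"
    using assms by (simp add: h_def power2_norm_eq_inner)
  have "2 * of_real pi * \<i> * of_real ((a - b) \<bullet> h) = \<i> * of_real (pi / 2)"
    unfolding quarter by (simp add: field_simps)
  then have "e_fun (a - b) h = exp (\<i> * of_real (pi / 2))"
    unfolding e_fun_def by metis
  then have "e_fun (a - b) h = \<i>"
    by (metis cis_conv_exp cis_pi_half)
  then have "e_fun a h = \<i> * e_fun b h"
    using e_fun_add_left[of "a - b" b h] by simp
  then show "e_fun a h \<noteq> e_fun b h"
    by (metis complex_i_not_one e_fun_nonzero mult_cancel_right2)
qed

lemma e_fun_linear_independent:
  fixes W :: "(real^'n) set"
  assumes "finite W" and "\<And>s. (\<Sum>w\<in>W. A w * e_fun w s) = 0"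
  shows "\<forall>w\<in>W. A w = 0"
  using assms
proof (induction W arbitrary: A rule: finite_induct)
  case empty
  then show ?case by simp
next
  case (insert w0 W A)
  have rest: "A w * (e_fun w h - e_fun w0 h) = 0" if "w \<in> W" for w h
  proof -
    \<comment> \<open>Shifting by \<open>h\<close> and rescaling by \<open>e_fun w0 h\<close> kills the \<open>w0\<close> term.\<close>
    have "(\<Sum>w\<in>W. A w * (e_fun w h - e_fun w0 h) * e_fun w s)
        = (\<Sum>w\<in>insert w0 W. A w * e_fun w (s + h))
          - e_fun w0 h * (\<Sum>w\<in>insert w0 W. A w * e_fun w s)" for s
      using insert.hyps
      by (simp add: e_fun_add_right sum_distrib_left algebra_simps flip: sum_subtractf)
    then show ?thesis
      using insert.IH[of "\<lambda>w. A w * (e_fun w h - e_fun w0 h)"] insert.prems that by simp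
  qed
  have "\<forall>w\<in>W. A w = 0"
  proof
    fix w assume "w \<in> W"
    moreover obtain h where "e_fun w h \<noteq> e_fun w0 h"
      using e_fun_separates \<open>w \<in> W\<close> insert.hyps by metis
    ultimately show "A w = 0" using rest by fastforce
  qed
  moreover have "A w0 = 0"
    using insert.prems[of 0] insert.hyps calculation by simp
  ultimately show ?case by simp
qed

lemma sesquilinear_form_zero_imp_coeffs_zero:
  fixes H :: "'a \<Rightarrow> 'a \<Rightarrow> complex"
  assumes "finite B" and zero: "\<And>w. (\<Sum>x\<in>B. \<Sum>y\<in>B. w x * cnj (w y) * H x y) = 0"
    and "b \<in> B" "b' \<in> B"
  shows "H b b' = 0"
proof -
  have [simp]: "(if P then a else 0) * c = (if P then a * c else 0)"
    "c * (if P then a else 0) = (if P then c * a else 0)"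
    "cnj (if P then a else 0) = (if P then cnj a else 0)" for P and a c :: complex
    by simp_all
  define \<delta> where "\<delta> (c::'a) z = (if z = c then 1 else 0 :: complex)" for c z
  have form_pair: "(\<Sum>x\<in>B. \<Sum>y\<in>B. (p * \<delta> b x + q * \<delta> b' x) * cnj (p * \<delta> b y + q * \<delta> b' y) * H x y)
      = p * cnj p * H b b + p * cnj q * H b b' + q * cnj p * H b' b + q * cnj q * H b' b'"
    if "b \<noteq> b'" for p q
    using assms that
    by (simp add: \<delta>_def distrib_left distrib_right sum.distrib sum.delta sum.delta' cong: if_cong)
  have diag: "H c c = 0" if "c \<in> B" for c
    using zero[of "\<delta> c"] assms(1) that by (simp add: \<delta>_def sum.delta sum.delta' cong: if_cong)
  show ?thesis
  proof (cases "b = b'")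
    case True
    then show ?thesis using diag assms by simp
  next
    case False
    \<comment> \<open>Polarization: the test vectors \<open>\<delta> b + \<delta> b'\<close> and \<open>\<delta> b + \<i> \<delta> b'\<close>.\<close>
    have "H b b' + H b' b = 0"
      using zero[of "\<lambda>z. 1 * \<delta> b z + 1 * \<delta> b' z"] form_pair[OF False, of 1 1] diag assms by simp
    moreover have "- \<i> * H b b' + \<i> * H b' b = 0"
      using zero[of "\<lambda>z. 1 * \<delta> b z + \<i> * \<delta> b' z"] form_pair[OF False, of 1 \<i>] diag assms by simp
    ultimately have "2 * \<i> * H b b' = 0"
      by (simp add: algebra_simps eq_neg_iff_add_eq_0 flip: add_eq_0_iff2)
    then show ?thesis by simp
  qed
qed

lemma cmod_sum_power2:
  "complex_of_real ((cmod (\<Sum>x\<in>A. f x))\<^sup>2) = (\<Sum>x\<in>A. \<Sum>y\<in>A. f x * cnj (f y))"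
  unfolding complex_norm_square cnj_sum sum_product ..

lemma isometry_iff_orthonormal_columns:
  fixes M :: "'r \<Rightarrow> 'c \<Rightarrow> complex"
  assumes "finite Rows" "finite Cols"
  shows "(\<forall>w. (\<Sum>r\<in>Rows. (cmod (\<Sum>c\<in>Cols. M r c * w c))\<^sup>2) = (\<Sum>c\<in>Cols. (cmod (w c))\<^sup>2))
     \<longleftrightarrow> orthonormal_columns M Rows Cols"
proof -
  define H where "H c c' = (\<Sum>r\<in>Rows. M r c * cnj (M r c')) - (if c = c' then 1 else 0)" for c c'
  have defect: "complex_of_real ((\<Sum>r\<in>Rows. (cmod (\<Sum>c\<in>Cols. M r c * w c))\<^sup>2) - (\<Sum>c\<in>Cols. (cmod (w c))\<^sup>2))
      = (\<Sum>c\<in>Cols. \<Sum>c'\<in>Cols. w c * cnj (w c') * H c c')" for w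
  proof -
    have "complex_of_real (\<Sum>r\<in>Rows. (cmod (\<Sum>c\<in>Cols. M r c * w c))\<^sup>2)
        = (\<Sum>c\<in>Cols. \<Sum>c'\<in>Cols. w c * cnj (w c') * (\<Sum>r\<in>Rows. M r c * cnj (M r c')))"
      unfolding of_real_sum cmod_sum_power2 sum_distrib_left
      by (subst sum.swap, rule sum.cong[OF refl], subst sum.swap) (simp add: mult_ac)
    moreover have "complex_of_real (\<Sum>c\<in>Cols. (cmod (w c))\<^sup>2)
        = (\<Sum>c\<in>Cols. \<Sum>c'\<in>Cols. w c * cnj (w c') * (if c = c' then 1 else 0))"
      unfolding of_real_sum complex_norm_square
      using assms(2) by (simp add: if_distrib[of "(*) _"] sum.delta' cong: if_cong)
    ultimately show ?thesis
      by (simp add: H_def right_diff_distrib sum_subtractf)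
  qed
  have "(\<forall>w. (\<Sum>r\<in>Rows. (cmod (\<Sum>c\<in>Cols. M r c * w c))\<^sup>2) = (\<Sum>c\<in>Cols. (cmod (w c))\<^sup>2))
      \<longleftrightarrow> (\<forall>w. (\<Sum>c\<in>Cols. \<Sum>c'\<in>Cols. w c * cnj (w c') * H c c') = 0)"
    unfolding defect[symmetric] of_real_eq_0_iff by simp
  also have "\<dots> \<longleftrightarrow> (\<forall>c\<in>Cols. \<forall>c'\<in>Cols. H c c' = 0)"
    using sesquilinear_form_zero_imp_coeffs_zero[OF assms(2)] by auto
  also have "\<dots> \<longleftrightarrow> orthonormal_columns M Rows Cols"
    by (simp add: orthonormal_columns_def H_def)
  finally show ?thesis .
qed

lemma det_uminus_of_real:
  fixes R :: "real^'n^'n"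
  shows "det (- (\<chi> i j. complex_of_real (R $ i $ j)) :: complex^'n^'n)
    = (-1) ^ CARD('n) * of_real (det R)"
  unfolding det_def by (simp add: sum_distrib_left prod_uminus mult_ac)

lemma expansive_imp_invertible:
  fixes R :: "real^'n^'n"
  assumes "expansive R"
  shows "invertible R"
proof -
  have "det ((mat 0 - (\<chi> i j. complex_of_real (R $ i $ j))) :: complex^'n^'n) \<noteq> 0"
    using assms unfolding expansive_def by (metis norm_zero not_one_less_zero)
  then show ?thesis
    by (simp add: det_uminus_of_real invertible_det_nz)
qed

lemma matrix_mul_matrix_inv:
  fixes A :: "'a::semiring_1^'n^'n"
  assumes "invertible A"
  shows "A ** matrix_inv A = mat 1"
  using someI_ex[OF assms[unfolded invertible_def]] unfolding matrix_inv_def by auto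

lemma matrix_inv_transpose:
  fixes A :: "real^'n^'n"
  assumes "invertible A"
  shows "matrix_inv (transpose A) = transpose (matrix_inv A)"
proof -
  have "transpose (matrix_inv A) ** transpose A = mat 1"
    by (metis assms matrix_mul_matrix_inv matrix_transpose_mul transpose_mat)
  then have "matrix_inv (transpose A) = transpose (matrix_inv A) ** (transpose A ** matrix_inv (transpose A))"
    by (simp add: matrix_mul_assoc)
  then show ?thesis
    by (simp add: matrix_mul_matrix_inv transpose_invertible assms)
qed

lemma matrix_vector_mul_matrix_inv_cancel:
  fixes A :: "real^'n^'n"
  assumes "invertible A"
  shows "A *v (matrix_inv A *v x) = x"
  by (simp add: assms matrix_vector_mul_assoc matrix_mul_matrix_inv)

lemma e_fun_matrix_inv_transpose:
  fixes R :: "real^'n^'n"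
  assumes "invertible R"
  shows "e_fun (matrix_inv (transpose R) *v x) y = e_fun x (matrix_inv R *v y)"
  unfolding e_fun_def using assms by (simp add: matrix_inv_transpose dot_lmul_matrix)

definition weight_transform :: "(real^'n \<Rightarrow> complex) \<Rightarrow> (real^'n) set \<Rightarrow> real^'n \<Rightarrow> complex" where
  "weight_transform \<alpha> L x = (\<Sum>l\<in>L. of_real ((cmod (\<alpha> l))\<^sup>2) * e_fun l x)"

lemma T_entry_gram:
  fixes R :: "real^'n^'n"
  assumes "invertible R"
  shows "(\<Sum>l\<in>L. T_entry R B \<alpha> l b * cnj (T_entry R B \<alpha> l b'))
    = weight_transform \<alpha> L (matrix_inv R *v (b - b')) / of_nat (card B)"
proof -
  have "T_entry R B \<alpha> l b * cnj (T_entry R B \<alpha> l b')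
      = of_real ((cmod (\<alpha> l))\<^sup>2) * e_fun l (matrix_inv R *v (b - b'))
        / (of_real (sqrt (real (card B))))\<^sup>2" for l
    unfolding T_entry_def e_fun_matrix_inv_transpose[OF assms] complex_norm_square
      matrix_vector_mult_diff_distrib e_fun_commute[of l] e_fun_times_cnj[symmetric]
    by (simp add: power2_eq_square field_simps)
  moreover have "(of_real (sqrt (real (card B))))\<^sup>2 = (of_nat (card B) :: complex)"
    by (metis of_real_of_nat_eq of_real_power real_sqrt_pow2 of_nat_0_le_iff)
  ultimately show ?thesis
    by (simp add: weight_transform_def sum_divide_distrib)
qed

lemma orthonormal_columns_T_entry_iff:
  fixes R :: "real^'n^'n"
  assumes "invertible R" and "finite B" and "B \<noteq> {}"
  shows "orthonormal_columns (T_entry R B \<alpha>) L B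
    \<longleftrightarrow> (\<forall>b\<in>B. \<forall>b'\<in>B. weight_transform \<alpha> L (matrix_inv R *v (b - b'))
                      = (if b = b' then of_nat (card B) else 0))"
proof -
  have "card B \<noteq> 0" using assms by simp
  then have "(z / of_nat (card B) = (if b = b' then 1 else 0))
      \<longleftrightarrow> (z = (if b = b' then of_nat (card B) else 0))" for z :: complex and b b' :: "real^'n"
    by (auto simp: field_simps)
  then show ?thesis
    by (simp add: orthonormal_columns_def T_entry_gram[OF assms(1)])
qed

lemma e_fun_sum_comp_eq_0_imp:
  fixes \<phi> :: "'a \<Rightarrow> real^'n"
  assumes "finite X" and zero: "\<And>t. (\<Sum>x\<in>X. h (\<phi> x) * e_fun (\<phi> x) t) = 0" and "x \<in> X"
  shows "h (\<phi> x) = 0"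
proof -
  define K where "K u = (of_nat (card {y \<in> X. \<phi> y = u}) :: complex)" for u
  have "(\<Sum>x\<in>X. h (\<phi> x) * e_fun (\<phi> x) t) = (\<Sum>u\<in>\<phi> ` X. (K u * h u) * e_fun u t)" for t
    unfolding K_def using sum.image_gen[OF assms(1), of "\<lambda>x. h (\<phi> x) * e_fun (\<phi> x) t" \<phi>]
    by (simp add: mult.assoc)
  then have "K (\<phi> x) * h (\<phi> x) = 0"
    using e_fun_linear_independent[of "\<phi> ` X" "\<lambda>u. K u * h u"] zero assms(1,3) by simp
  moreover have "K (\<phi> x) \<noteq> 0"
    unfolding K_def using assms(1,3) by (auto simp: card_eq_0_iff)
  ultimately show ?thesis by simp
qed

lemma e_fun_diff_right: "e_fun u (t - l) = e_fun u t * e_fun l (- u)"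
  using e_fun_add_right[of u t "- l"] by (simp add: e_fun_def inner_commute)

lemma sum_m_B_power2_expansion:
  fixes R :: "real^'n^'n"
  assumes "invertible R" and "finite B" and "finite L"
  shows "complex_of_real (\<Sum>l\<in>L. (cmod (\<alpha> l))\<^sup>2 * (cmod (m_B B (matrix_inv (transpose R) *v (t - l))))\<^sup>2)
    = (\<Sum>b\<in>B. \<Sum>b'\<in>B. weight_transform \<alpha> L (- (matrix_inv R *v (b - b')))
                        * e_fun (matrix_inv R *v (b - b')) t) / (of_nat (card B))\<^sup>2"
proof -
  let ?Ri = "matrix_inv R"
  have m: "m_B B (matrix_inv (transpose R) *v (t - l))
      = (\<Sum>b\<in>B. e_fun (?Ri *v b) (t - l)) / of_nat (card B)" for l
    unfolding m_B_def
    by (simp add: e_fun_commute[of _ "matrix_inv (transpose R) *v _"] e_fun_commute[of _ "t - l"]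
        e_fun_matrix_inv_transpose[OF assms(1)])
  have "complex_of_real ((cmod (m_B B (matrix_inv (transpose R) *v (t - l))))\<^sup>2)
      = (\<Sum>b\<in>B. \<Sum>b'\<in>B. e_fun (?Ri *v b) (t - l) * cnj (e_fun (?Ri *v b') (t - l)))
        / (of_nat (card B))\<^sup>2" for l
    unfolding complex_norm_square m by (simp add: cnj_sum sum_product power2_eq_square)
  also have "\<dots> l = (\<Sum>b\<in>B. \<Sum>b'\<in>B. e_fun (?Ri *v (b - b')) t * e_fun l (- (?Ri *v (b - b'))))
        / (of_nat (card B))\<^sup>2" for l
    by (simp only: e_fun_times_cnj) (simp add: e_fun_diff_right matrix_vector_mult_diff_distrib)
  finally have "complex_of_real ((cmod (m_B B (matrix_inv (transpose R) *v (t - l))))\<^sup>2)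
      = (\<Sum>b\<in>B. \<Sum>b'\<in>B. e_fun (?Ri *v (b - b')) t * e_fun l (- (?Ri *v (b - b'))))
        / (of_nat (card B))\<^sup>2" for l .
  then have "complex_of_real (\<Sum>l\<in>L. (cmod (\<alpha> l))\<^sup>2 * (cmod (m_B B (matrix_inv (transpose R) *v (t - l))))\<^sup>2)
      = (\<Sum>l\<in>L. \<Sum>b\<in>B. \<Sum>b'\<in>B. of_real ((cmod (\<alpha> l))\<^sup>2)
            * e_fun l (- (?Ri *v (b - b'))) * e_fun (?Ri *v (b - b')) t) / (of_nat (card B))\<^sup>2"
    by (simp add: sum_divide_distrib sum_distrib_left mult_ac)
  also have "\<dots> = (\<Sum>b\<in>B. \<Sum>b'\<in>B. \<Sum>l\<in>L. of_real ((cmod (\<alpha> l))\<^sup>2)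
            * e_fun l (- (?Ri *v (b - b'))) * e_fun (?Ri *v (b - b')) t) / (of_nat (card B))\<^sup>2"
    by (subst sum.swap, subst (2) sum.swap) (rule refl)
  finally show ?thesis
    by (simp add: weight_transform_def sum_distrib_right)
qed

lemma sum_m_B_power2_eq_1_iff:
  fixes R :: "real^'n^'n"
  assumes "invertible R" and "finite B" and "B \<noteq> {}" and "finite L"
  shows "(\<forall>t. (\<Sum>l\<in>L. (cmod (\<alpha> l))\<^sup>2 * (cmod (m_B B (matrix_inv (transpose R) *v (t - l))))\<^sup>2) = 1)
    \<longleftrightarrow> (\<forall>b\<in>B. \<forall>b'\<in>B. weight_transform \<alpha> L (matrix_inv R *v (b - b'))
                      = (if b = b' then of_nat (card B) else 0))"
  (is "(\<forall>t. ?S t = 1) \<longleftrightarrow> ?orth")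
proof -
  let ?Ri = "matrix_inv R"
  let ?N = "of_nat (card B) :: complex"
  define \<phi> where "\<phi> p = ?Ri *v (fst p - snd p)" for p :: "(real^'n) \<times> (real^'n)"
  \<comment> \<open>\<open>h u\<close> is the coefficient of \<open>N\<^sup>2 (?S t - 1)\<close> at the frequency \<open>u = R\<^sup>-\<^sup>1(b - b')\<close>, per pair \<open>(b, b')\<close>.\<close>
  define h where "h u = weight_transform \<alpha> L (- u) - (if u = 0 then ?N else 0)" for u
  have N: "?N \<noteq> 0" using assms(2,3) by simp
  have \<phi>_eq_0: "\<phi> p = 0 \<longleftrightarrow> fst p = snd p" for p
    using matrix_vector_mul_matrix_inv_cancel[OF assms(1), of "fst p - snd p"] by (auto simp: \<phi>_def)
  have h_\<phi>: "h (\<phi> (b', b)) = weight_transform \<alpha> L (?Ri *v (b - b')) - (if b = b' then ?N else 0)" for b b'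
    unfolding h_def using \<phi>_eq_0[of "(b', b)"]
    by (simp add: \<phi>_def matrix_vector_mult_diff_distrib)
  have "(\<Sum>p\<in>B \<times> B. (if \<phi> p = 0 then ?N else 0) * e_fun (\<phi> p) t)
      = (\<Sum>b\<in>B. \<Sum>b'\<in>B. if b = b' then ?N else 0)" for t
    unfolding sum.cartesian_product by (rule sum.cong) (use \<phi>_eq_0 in \<open>auto simp: \<phi>_def\<close>)
  also have "\<dots> = ?N\<^sup>2"
    using assms(2) by (simp add: sum.delta power2_eq_square)
  finally have one: "(\<Sum>p\<in>B \<times> B. (if \<phi> p = 0 then ?N else 0) * e_fun (\<phi> p) t) = ?N\<^sup>2" for t .
  have "complex_of_real (?S t) = (\<Sum>p\<in>B \<times> B. weight_transform \<alpha> L (- \<phi> p) * e_fun (\<phi> p) t) / ?N\<^sup>2" for t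
    unfolding sum_m_B_power2_expansion[OF assms(1,2,4)] sum.cartesian_product \<phi>_def
    by (simp add: split_def)
  then have "complex_of_real (?S t) - 1 = (\<Sum>p\<in>B \<times> B. h (\<phi> p) * e_fun (\<phi> p) t) / ?N\<^sup>2" for t
    using N one[of t] by (simp add: h_def left_diff_distrib sum_subtractf diff_divide_distrib)
  then have S_eq_1: "?S t = 1 \<longleftrightarrow> (\<Sum>p\<in>B \<times> B. h (\<phi> p) * e_fun (\<phi> p) t) = 0" for t
    using N by (metis (no_types, lifting) divide_eq_0_iff of_real_1 of_real_eq_iff right_minus_eq
        zero_eq_power2)
  have orth: "?orth \<longleftrightarrow> (\<forall>p\<in>B \<times> B. h (\<phi> p) = 0)"
    using h_\<phi> by auto
  show ?thesis
  proof
    assume "\<forall>t. ?S t = 1"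
    then show ?orth
      using e_fun_sum_comp_eq_0_imp[of "B \<times> B" h \<phi>] assms(2) by (simp add: orth S_eq_1)
  qed (auto simp: orth S_eq_1 intro: sum.neutral)
qed

lemma l2_delta_inner_e_fun:
  fixes R :: "real^'n^'n"
  assumes "invertible R"
  shows "l2_delta_inner R B v (\<lambda>x. \<alpha> l * e_fun l x)
    = cnj (\<Sum>b\<in>B. T_entry R B \<alpha> l b * cnj (v (matrix_inv R *v b))) / of_real (sqrt (real (card B)))"
proof -
  have "(1 / of_nat (card B) :: complex) = 1 / of_real (sqrt (real (card B))) / of_real (sqrt (real (card B)))"
    by (simp flip: of_real_mult)
  then show ?thesis
    unfolding l2_delta_inner_def T_entry_def e_fun_matrix_inv_transpose[OF assms]
    by (simp add: cnj_sum sum_divide_distrib sum_distrib_left mult_ac)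
qed

lemma parseval_frame_iff_orthonormal_columns:
  fixes R :: "real^'n^'n"
  assumes "invertible R" and "finite B" and "B \<noteq> {}" and "finite L"
  shows "parseval_frame (l2_delta_inner R B) UNIV (\<lambda>l x. \<alpha> l * e_fun l x) L
    \<longleftrightarrow> orthonormal_columns (T_entry R B \<alpha>) L B"
proof -
  let ?Ri = "matrix_inv R"
  let ?T = "T_entry R B \<alpha>"
  have N: "real (card B) > 0" using assms(2,3) by (simp add: card_gt_0_iff)
  have frame_sum: "(\<Sum>l\<in>L. (cmod (l2_delta_inner R B v (\<lambda>x. \<alpha> l * e_fun l x)))\<^sup>2)
      = (\<Sum>l\<in>L. (cmod (\<Sum>b\<in>B. ?T l b * cnj (v (?Ri *v b))))\<^sup>2) / real (card B)" for v
  proof -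
    have "(cmod (l2_delta_inner R B v (\<lambda>x. \<alpha> l * e_fun l x)))\<^sup>2
        = (cmod (\<Sum>b\<in>B. ?T l b * cnj (v (?Ri *v b))))\<^sup>2 / real (card B)" for l
      unfolding l2_delta_inner_e_fun[OF assms(1)] norm_divide complex_mod_cnj
      using N by (simp add: power_divide)
    then show ?thesis by (simp add: sum_divide_distrib)
  qed
  have norm_sum: "Re (l2_delta_inner R B v v) = (\<Sum>b\<in>B. (cmod (cnj (v (?Ri *v b))))\<^sup>2) / real (card B)" for v
    unfolding l2_delta_inner_def complex_mod_cnj complex_norm_square[symmetric] of_real_sum[symmetric]
    by (simp add: Re_divide_of_nat)
  have "parseval_frame (l2_delta_inner R B) UNIV (\<lambda>l x. \<alpha> l * e_fun l x) L
      \<longleftrightarrow> (\<forall>v. (\<Sum>l\<in>L. (cmod (\<Sum>b\<in>B. ?T l b * cnj (v (?Ri *v b))))\<^sup>2)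
              = (\<Sum>b\<in>B. (cmod (cnj (v (?Ri *v b))))\<^sup>2))"
    unfolding parseval_frame_def has_sum_finite_iff[OF assms(4)] frame_sum norm_sum
    using N by auto
  also have "\<dots> \<longleftrightarrow> (\<forall>w. (\<Sum>l\<in>L. (cmod (\<Sum>b\<in>B. ?T l b * w b))\<^sup>2) = (\<Sum>b\<in>B. (cmod (w b))\<^sup>2))"
  proof
    assume isometric: "\<forall>v. (\<Sum>l\<in>L. (cmod (\<Sum>b\<in>B. ?T l b * cnj (v (?Ri *v b))))\<^sup>2)
              = (\<Sum>b\<in>B. (cmod (cnj (v (?Ri *v b))))\<^sup>2)"
    show "\<forall>w. (\<Sum>l\<in>L. (cmod (\<Sum>b\<in>B. ?T l b * w b))\<^sup>2) = (\<Sum>b\<in>B. (cmod (w b))\<^sup>2)"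
    proof
      fix w :: "real^'n \<Rightarrow> complex"
      show "(\<Sum>l\<in>L. (cmod (\<Sum>b\<in>B. ?T l b * w b))\<^sup>2) = (\<Sum>b\<in>B. (cmod (w b))\<^sup>2)"
        using isometric[rule_format, of "\<lambda>x. cnj (w (R *v x))"]
        by (simp add: matrix_vector_mul_matrix_inv_cancel[OF assms(1)])
    qed
  qed auto
  also have "\<dots> \<longleftrightarrow> orthonormal_columns ?T L B"
    by (rule isometry_iff_orthonormal_columns[OF assms(4,2)])
  finally show ?thesis .
qed

theorem proposition3p5:
  fixes R :: "real^'n^'n" and B L :: "(real^'n) set" and \<alpha> :: "real^'n \<Rightarrow> complex"
  assumes "int_matrix R" and "expansive R"
    and "finite B" and "0 \<in> B" and "\<forall>b\<in>B. int_vec b"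
    and "finite L" and "0 \<in> L" and "\<forall>l\<in>L. int_vec l"
  shows "(orthonormal_columns (T_entry R B \<alpha>) L B
            \<longleftrightarrow> (\<forall>t::real^'n. (\<Sum>l\<in>L. (cmod (\<alpha> l))\<^sup>2
                   * (cmod (m_B B (matrix_inv (transpose R) *v (t - l))))\<^sup>2) = 1))
       \<and> ((\<forall>t::real^'n. (\<Sum>l\<in>L. (cmod (\<alpha> l))\<^sup>2
                   * (cmod (m_B B (matrix_inv (transpose R) *v (t - l))))\<^sup>2) = 1)
            \<longleftrightarrow> parseval_frame (l2_delta_inner R B) UNIV (\<lambda>l x. \<alpha> l * e_fun l x) L)"
proof -
  have R: "invertible R"
    using assms(2) by (rule expansive_imp_invertible)
  have B: "B \<noteq> {}"
    using assms(4) by auto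
  show ?thesis
    using orthonormal_columns_T_entry_iff[OF R assms(3) B]
      sum_m_B_power2_eq_1_iff[OF R assms(3) B assms(6)]
      parseval_frame_iff_orthonormal_columns[OF R assms(3) B assms(6)]
    by simp
qed

end
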